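(* Let $\mathbb{E}$ be a regular category, $\Sigma$ a fibrational class of split epimorphisms, and suppose $\mathbb{E}$ is a $\Sigma$-Mal'tsev category. Let $R$ be a reflexive relation and $S$ a symmetric $\Sigma$-relation on an object $X$. Then $R$ and $S$ permute: $R\circ S=S\circ R$.
   Context: A split epimorphism is a pair $(f,s)$ with $fs=1$. A class $\Sigma$ of split epimorphisms is fibrational if it contains all split epimorphisms $(f,s)$ with $f$ invertible and is stable under pullback along any morphism. A pair of morphisms with common codomain $Z$ is jointly extremally epic if it factors jointly through no non-invertible monomorphism into $Z$. $\mathbb{E}$ is $\Sigma$-Mal'tsev if for every split epimorphism $(f,s)\colon X\rightleftarrows Y$ in $\Sigma$ and every split epimorphism $(g,t)$ with $g\colon Y'\to Y$, letting $X'=Y'\times_YX$, $s'=(1_{Y'},sg)$, $\bar t=(tf,1_X)$, the pair $(s',\bar t)$ is jointly extremally epic. A $\Sigma$-relation on $X$ is a reflexive relation $(d_0,d_1)\colon S\rightarrowtail X\times X$ with reflexivity $s_0$ such that $(d_0,s_0)\in\Sigma$. In a regular category, for relations $R$ on $X$ and $S$ on $X$, the composite $R\circ S$ is the image of the morphism $(d_0^R\pi_0,d_1^S\pi_1)\colon T\to X\times X$, where $T$ is the pullback of $d_0^S$ along $d_1^R$ with projections $\pi_0\colon T\to R$, $\pi_1\colon T\to S$ (so in set-theoretic terms $x(R\circ S)z$ iff $xRySz$ for some $y$). *)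

theory Defs
  imports Main
begin

text \<open>A small self-contained rendering of (locally small, not necessarily small)
categories: objects of type 'o, arrows of type 'a, with partial composition
  cmp C g f  =  g after f  (defined when cod f = dom g).\<close>

record ('o, 'a) cat =
  Ob  :: "'o set"
  Ar  :: "'a set"
  Dom :: "'a \<Rightarrow> 'o"
  Cod :: "'a \<Rightarrow> 'o"
  cmp :: "'a \<Rightarrow> 'a \<Rightarrow> 'a"
  idn :: "'o \<Rightarrow> 'a"

definition arr :: "('o,'a,'m) cat_scheme \<Rightarrow> 'a \<Rightarrow> 'o \<Rightarrow> 'o \<Rightarrow> bool" where
  "arr C f X Y \<longleftrightarrow> f \<in> Ar C \<and> Dom C f = X \<and> Cod C f = Y"

definition category :: "('o,'a,'m) cat_scheme \<Rightarrow> bool" where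
  "category C \<longleftrightarrow>
     (\<forall>f \<in> Ar C. Dom C f \<in> Ob C \<and> Cod C f \<in> Ob C) \<and>
     (\<forall>X \<in> Ob C. arr C (idn C X) X X) \<and>
     (\<forall>f \<in> Ar C. \<forall>g \<in> Ar C. Cod C f = Dom C g \<longrightarrow>
         arr C (cmp C g f) (Dom C f) (Cod C g)) \<and>
     (\<forall>f \<in> Ar C. cmp C f (idn C (Dom C f)) = f \<and> cmp C (idn C (Cod C f)) f = f) \<and>
     (\<forall>f \<in> Ar C. \<forall>g \<in> Ar C. \<forall>h \<in> Ar C. Cod C f = Dom C g \<longrightarrow> Cod C g = Dom C h \<longrightarrow>
         cmp C h (cmp C g f) = cmp C (cmp C h g) f)"

definition mono :: "('o,'a,'m) cat_scheme \<Rightarrow> 'a \<Rightarrow> bool" where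
  "mono C m \<longleftrightarrow> m \<in> Ar C \<and>
     (\<forall>a b W. arr C a W (Dom C m) \<longrightarrow> arr C b W (Dom C m) \<longrightarrow>
        cmp C m a = cmp C m b \<longrightarrow> a = b)"

definition iso :: "('o,'a,'m) cat_scheme \<Rightarrow> 'a \<Rightarrow> bool" where
  "iso C f \<longleftrightarrow> f \<in> Ar C \<and> (\<exists>g. arr C g (Cod C f) (Dom C f) \<and>
      cmp C g f = idn C (Dom C f) \<and> cmp C f g = idn C (Cod C f))"

definition coequalizer :: "('o,'a,'m) cat_scheme \<Rightarrow> 'a \<Rightarrow> 'a \<Rightarrow> 'a \<Rightarrow> bool" where
  "coequalizer C a b e \<longleftrightarrow>
     (\<exists>X Y Q. arr C a X Y \<and> arr C b X Y \<and> arr C e Y Q \<and> cmp C e a = cmp C e b \<and>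
        (\<forall>h W. arr C h Y W \<longrightarrow> cmp C h a = cmp C h b \<longrightarrow>
           (\<exists>!k. arr C k Q W \<and> cmp C k e = h)))"

definition regular_epi :: "('o,'a,'m) cat_scheme \<Rightarrow> 'a \<Rightarrow> bool" where
  "regular_epi C e \<longleftrightarrow> (\<exists>a b. coequalizer C a b e)"

text \<open>pullback C f g p q: the square  f p = g q  (f : A \<rightarrow> Z, g : B \<rightarrow> Z,
  p : P \<rightarrow> A, q : P \<rightarrow> B) is a pullback.  Then q is the pullback of f along g.\<close>
definition pullback :: "('o,'a,'m) cat_scheme \<Rightarrow> 'a \<Rightarrow> 'a \<Rightarrow> 'a \<Rightarrow> 'a \<Rightarrow> bool" where
  "pullback C f g p q \<longleftrightarrow>
     (\<exists>A B Z P. arr C f A Z \<and> arr C g B Z \<and> arr C p P A \<and> arr C q P B \<and>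
        cmp C f p = cmp C g q \<and>
        (\<forall>x y W. arr C x W A \<longrightarrow> arr C y W B \<longrightarrow> cmp C f x = cmp C g y \<longrightarrow>
           (\<exists>!u. arr C u W P \<and> cmp C p u = x \<and> cmp C q u = y)))"

definition terminal :: "('o,'a,'m) cat_scheme \<Rightarrow> 'o \<Rightarrow> bool" where
  "terminal C T \<longleftrightarrow> T \<in> Ob C \<and> (\<forall>X \<in> Ob C. \<exists>!t. arr C t X T)"

definition regular_category :: "('o,'a,'m) cat_scheme \<Rightarrow> bool" where
  "regular_category C \<longleftrightarrow> category C \<and>
     (\<exists>T. terminal C T) \<and>
     (\<forall>f g. f \<in> Ar C \<longrightarrow> g \<in> Ar C \<longrightarrow> Cod C f = Cod C g \<longrightarrow>
        (\<exists>p q. pullback C f g p q)) \<and>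
     (\<forall>f \<in> Ar C. \<exists>e m. regular_epi C e \<and> mono C m \<and> Cod C e = Dom C m \<and>
        cmp C m e = f) \<and>
     (\<forall>f g p q. pullback C f g p q \<longrightarrow> regular_epi C f \<longrightarrow> regular_epi C q)"

definition split_epi :: "('o,'a,'m) cat_scheme \<Rightarrow> 'a \<Rightarrow> 'a \<Rightarrow> bool" where
  "split_epi C f s \<longleftrightarrow> f \<in> Ar C \<and> s \<in> Ar C \<and> Dom C s = Cod C f \<and>
     Cod C s = Dom C f \<and> cmp C f s = idn C (Cod C f)"

text \<open>A fibrational class of split epimorphisms: contains all split epis with f
invertible and is stable under pullback along any morphism g : Y' \<rightarrow> Y
(for every pullback X' of f along g, with projections f' : X' \<rightarrow> Y', g' : X' \<rightarrow> X,
and induced section s' = (1, s g)).\<close>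
definition fibrational :: "('o,'a,'m) cat_scheme \<Rightarrow> ('a \<times> 'a) set \<Rightarrow> bool" where
  "fibrational C \<Sigma> \<longleftrightarrow>
     (\<forall>(f, s) \<in> \<Sigma>. split_epi C f s) \<and>
     (\<forall>f s. split_epi C f s \<longrightarrow> iso C f \<longrightarrow> (f, s) \<in> \<Sigma>) \<and>
     (\<forall>f s g f' g' s'. (f, s) \<in> \<Sigma> \<longrightarrow> g \<in> Ar C \<longrightarrow> Cod C g = Cod C f \<longrightarrow>
        pullback C f g g' f' \<longrightarrow>
        arr C s' (Dom C g) (Dom C f') \<longrightarrow>
        cmp C f' s' = idn C (Dom C g) \<longrightarrow> cmp C g' s' = cmp C s g \<longrightarrow>
        (f', s') \<in> \<Sigma>)"

definition jointly_extremally_epic :: "('o,'a,'m) cat_scheme \<Rightarrow> 'a \<Rightarrow> 'a \<Rightarrow> bool" where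
  "jointly_extremally_epic C a b \<longleftrightarrow> a \<in> Ar C \<and> b \<in> Ar C \<and> Cod C a = Cod C b \<and>
     (\<forall>m u v. mono C m \<longrightarrow> Cod C m = Cod C a \<longrightarrow>
        arr C u (Dom C a) (Dom C m) \<longrightarrow> arr C v (Dom C b) (Dom C m) \<longrightarrow>
        cmp C m u = a \<longrightarrow> cmp C m v = b \<longrightarrow> iso C m)"

text \<open>Sigma-Mal'tsev: for (f,s) : X \<rightleftarrows> Y in Sigma and a split epi (g,t), g : Y' \<rightarrow> Y,
with X' = Y' \<times>_Y X (projections f' : X' \<rightarrow> Y', g' : X' \<rightarrow> X), s' = (1, s g),
tbar = (t f, 1), the pair (s', tbar) is jointly extremally epic.\<close>
definition sigma_maltsev :: "('o,'a,'m) cat_scheme \<Rightarrow> ('a \<times> 'a) set \<Rightarrow> bool" where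
  "sigma_maltsev C \<Sigma> \<longleftrightarrow>
     (\<forall>f s g t f' g' s' tb. (f, s) \<in> \<Sigma> \<longrightarrow> split_epi C g t \<longrightarrow> Cod C g = Cod C f \<longrightarrow>
        pullback C f g g' f' \<longrightarrow>
        arr C s' (Dom C g) (Dom C f') \<longrightarrow>
        cmp C f' s' = idn C (Dom C g) \<longrightarrow> cmp C g' s' = cmp C s g \<longrightarrow>
        arr C tb (Dom C f) (Dom C f') \<longrightarrow>
        cmp C f' tb = cmp C t f \<longrightarrow> cmp C g' tb = idn C (Dom C f) \<longrightarrow>
        jointly_extremally_epic C s' tb)"

text \<open>A relation on X: a span (d0, d1) : S \<rightarrow> X with (d0,d1) : S \<rightarrow> X \<times> X monic,
i.e. d0, d1 jointly monic.\<close>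
definition relation :: "('o,'a,'m) cat_scheme \<Rightarrow> 'o \<Rightarrow> 'a \<Rightarrow> 'a \<Rightarrow> bool" where
  "relation C X d0 d1 \<longleftrightarrow> arr C d0 (Dom C d0) X \<and> arr C d1 (Dom C d0) X \<and>
     (\<forall>a b W. arr C a W (Dom C d0) \<longrightarrow> arr C b W (Dom C d0) \<longrightarrow>
        cmp C d0 a = cmp C d0 b \<longrightarrow> cmp C d1 a = cmp C d1 b \<longrightarrow> a = b)"

definition reflexivity :: "('o,'a,'m) cat_scheme \<Rightarrow> 'o \<Rightarrow> 'a \<Rightarrow> 'a \<Rightarrow> 'a \<Rightarrow> bool" where
  "reflexivity C X d0 d1 s0 \<longleftrightarrow> arr C s0 X (Dom C d0) \<and>
     cmp C d0 s0 = idn C X \<and> cmp C d1 s0 = idn C X"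

definition reflexive_relation :: "('o,'a,'m) cat_scheme \<Rightarrow> 'o \<Rightarrow> 'a \<Rightarrow> 'a \<Rightarrow> bool" where
  "reflexive_relation C X d0 d1 \<longleftrightarrow> relation C X d0 d1 \<and> (\<exists>s0. reflexivity C X d0 d1 s0)"

definition symmetric_relation :: "('o,'a,'m) cat_scheme \<Rightarrow> 'o \<Rightarrow> 'a \<Rightarrow> 'a \<Rightarrow> bool" where
  "symmetric_relation C X d0 d1 \<longleftrightarrow> relation C X d0 d1 \<and>
     (\<exists>\<sigma>. arr C \<sigma> (Dom C d0) (Dom C d0) \<and> cmp C d0 \<sigma> = d1 \<and> cmp C d1 \<sigma> = d0)"

definition sigma_relation :: "('o,'a,'m) cat_scheme \<Rightarrow> ('a \<times> 'a) set \<Rightarrow> 'o \<Rightarrow> 'a \<Rightarrow> 'a \<Rightarrow> bool" where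
  "sigma_relation C \<Sigma> X d0 d1 \<longleftrightarrow> relation C X d0 d1 \<and>
     (\<exists>s0. reflexivity C X d0 d1 s0 \<and> (d0, s0) \<in> \<Sigma>)"

text \<open>(u0, u1) is (a representative of) the composite R \<circ> S of R = (r0, r1) and
S = (s0, s1): T is the pullback of s0 along r1 with projections
pi0 : T \<rightarrow> R, pi1 : T \<rightarrow> S, and (u0, u1) is the image of (r0 pi0, s1 pi1), i.e.
(r0 pi0, s1 pi1) = (u0, u1) e with e a regular epi and (u0,u1) jointly monic.\<close>
definition is_composite :: "('o,'a,'m) cat_scheme \<Rightarrow> 'o \<Rightarrow> 'a \<Rightarrow> 'a \<Rightarrow> 'a \<Rightarrow> 'a \<Rightarrow> 'a \<Rightarrow> 'a \<Rightarrow> bool" where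
  "is_composite C X r0 r1 s0 s1 u0 u1 \<longleftrightarrow>
     (\<exists>pi0 pi1 e. pullback C r1 s0 pi0 pi1 \<and> regular_epi C e \<and>
        arr C e (Dom C pi0) (Dom C u0) \<and>
        cmp C u0 e = cmp C r0 pi0 \<and> cmp C u1 e = cmp C s1 pi1 \<and>
        relation C X u0 u1)"

definition rel_le :: "('o,'a,'m) cat_scheme \<Rightarrow> 'a \<Rightarrow> 'a \<Rightarrow> 'a \<Rightarrow> 'a \<Rightarrow> bool" where
  "rel_le C a0 a1 b0 b1 \<longleftrightarrow>
     (\<exists>h. arr C h (Dom C a0) (Dom C b0) \<and> cmp C b0 h = a0 \<and> cmp C b1 h = a1)"

end

theory Submission
  imports Defs
begin

text \<open>
Let \<rho> be a reflexivity of R and \<alpha> one of a \<Sigma>-relation A, and let T be the pullback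
of r1 and a0 that computes R \<circ> A. The \<Sigma>-Mal'tsev condition, applied to (a0, \<alpha>) and
the split epimorphism (r1, \<rho>), says that the sections (1, \<alpha> r1) : R \<rightarrow> T and
(\<rho> a0, 1) : A \<rightarrow> T are jointly extremally epic. Composed with the span T \<rightarrow> X \<times> X they
give R and A, both of which lie in A \<circ> R since the other factor is reflexive. So the pullback
of the monomorphism A \<circ> R \<rightarrow> X \<times> X along T \<rightarrow> X \<times> X contains both sections, hence is
all of T, and R \<circ> A \<le> A \<circ> R.
For a symmetric \<Sigma>-relation S the converse is again a \<Sigma>-relation: s1 is the pullback of s0
along the identity, with the symmetry as projection. Applying the inclusion to the converses
of R and S gives S \<circ> R \<le> R \<circ> S.
\<close>

definition binary_product :: "('o,'a,'m) cat_scheme \<Rightarrow> 'a \<Rightarrow> 'a \<Rightarrow> 'o \<Rightarrow> 'o \<Rightarrow> bool" where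
  "binary_product C p0 p1 A B \<longleftrightarrow> arr C p0 (Dom C p0) A \<and> arr C p1 (Dom C p0) B \<and>
     (\<forall>x y W. arr C x W A \<longrightarrow> arr C y W B \<longrightarrow>
        (\<exists>!u. arr C u W (Dom C p0) \<and> cmp C p0 u = x \<and> cmp C p1 u = y))"

locale category_context =
  fixes C :: "('o,'a) cat"
  assumes category: "category C"
begin

lemma arrD: "arr C f A B \<Longrightarrow> f \<in> Ar C \<and> Dom C f = A \<and> Cod C f = B"
  by (simp add: arr_def)

lemma category_axioms:
  "\<forall>f \<in> Ar C. Dom C f \<in> Ob C \<and> Cod C f \<in> Ob C"
  "\<forall>X \<in> Ob C. arr C (idn C X) X X"
  "\<forall>f \<in> Ar C. \<forall>g \<in> Ar C. Cod C f = Dom C g \<longrightarrow> arr C (cmp C g f) (Dom C f) (Cod C g)"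
  "\<forall>f \<in> Ar C. cmp C f (idn C (Dom C f)) = f \<and> cmp C (idn C (Cod C f)) f = f"
  "\<forall>f \<in> Ar C. \<forall>g \<in> Ar C. \<forall>h \<in> Ar C. Cod C f = Dom C g \<longrightarrow> Cod C g = Dom C h \<longrightarrow>
     cmp C h (cmp C g f) = cmp C (cmp C h g) f"
  using category unfolding category_def by blast+

lemma comp_arr: "arr C f A B \<Longrightarrow> arr C g B D \<Longrightarrow> arr C (cmp C g f) A D"
  using category_axioms(3) unfolding arr_def by auto

lemma cmp_assoc: "arr C f A B \<Longrightarrow> arr C g B D \<Longrightarrow> arr C h D E \<Longrightarrow>
    cmp C h (cmp C g f) = cmp C (cmp C h g) f"
  using category_axioms(5) unfolding arr_def by auto

lemma cmp_idn_left: "arr C f A B \<Longrightarrow> cmp C (idn C B) f = f"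
  using category_axioms(4) unfolding arr_def by auto

lemma cmp_idn_right: "arr C f A B \<Longrightarrow> cmp C f (idn C A) = f"
  using category_axioms(4) unfolding arr_def by auto

lemma idn_arr: "A \<in> Ob C \<Longrightarrow> arr C (idn C A) A A"
  using category_axioms(2) by auto

lemma arr_Ob: "arr C f A B \<Longrightarrow> A \<in> Ob C" "arr C f A B \<Longrightarrow> B \<in> Ob C"
  using category_axioms(1) unfolding arr_def by auto

lemma pullbackD:
  assumes "pullback C f g p q"
  shows "arr C f (Dom C f) (Cod C f)" "arr C g (Dom C g) (Cod C f)"
    "arr C p (Dom C p) (Dom C f)" "arr C q (Dom C p) (Dom C g)" "cmp C f p = cmp C g q"
    "\<And>x y W. arr C x W (Dom C f) \<Longrightarrow> arr C y W (Dom C g) \<Longrightarrow> cmp C f x = cmp C g y \<Longrightarrow>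
        \<exists>!u. arr C u W (Dom C p) \<and> cmp C p u = x \<and> cmp C q u = y"
  using assms unfolding pullback_def arr_def by auto

lemma pullback_sym: "pullback C f g p q \<Longrightarrow> pullback C g f q p"
  unfolding pullback_def by (smt (verit))

lemma pullback_lift:
  "pullback C f g p q \<Longrightarrow> arr C x W (Dom C f) \<Longrightarrow> arr C y W (Dom C g) \<Longrightarrow>
    cmp C f x = cmp C g y \<Longrightarrow> \<exists>u. arr C u W (Dom C p) \<and> cmp C p u = x \<and> cmp C q u = y"
  using pullbackD(6) by blast

lemma pullback_lift_unique:
  assumes pb: "pullback C f g p q" and u: "arr C u W (Dom C p)" and u': "arr C u' W (Dom C p)"
    and "cmp C p u = cmp C p u'" and "cmp C q u = cmp C q u'"
  shows "u = u'"
proof -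
  note f = pullbackD(1)[OF pb] and g = pullbackD(2)[OF pb]
    and p = pullbackD(3)[OF pb] and q = pullbackD(4)[OF pb]
  have "cmp C f (cmp C p u) = cmp C g (cmp C q u)"
    using cmp_assoc[OF u p f] cmp_assoc[OF u q g] pullbackD(5)[OF pb] by simp
  with pullbackD(6)[OF pb comp_arr[OF u p] comp_arr[OF u q]] u u' assms(4,5) show ?thesis
    by metis
qed

lemma mono_pullback:
  assumes pb: "pullback C f g p q" and g_mono: "mono C g"
  shows "mono C p"
  unfolding mono_def
proof (intro conjI allI impI)
  note f = pullbackD(1)[OF pb] and g = pullbackD(2)[OF pb]
    and p = pullbackD(3)[OF pb] and q = pullbackD(4)[OF pb]
  show "p \<in> Ar C" using p arrD by blast
  fix x y W
  assume x: "arr C x W (Dom C p)" and y: "arr C y W (Dom C p)" and eq: "cmp C p x = cmp C p y"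
  have "cmp C g (cmp C q x) = cmp C g (cmp C q y)"
    using cmp_assoc[OF x p f] cmp_assoc[OF y p f] cmp_assoc[OF x q g] cmp_assoc[OF y q g]
      pullbackD(5)[OF pb] eq by metis
  then have "cmp C q x = cmp C q y"
    using g_mono comp_arr[OF x q] comp_arr[OF y q] unfolding mono_def by blast
  then show "x = y" using pullback_lift_unique[OF pb x y eq] by blast
qed

lemma regular_epi_cancel:
  assumes "regular_epi C e" "arr C x (Cod C e) W" "arr C y (Cod C e) W" "cmp C x e = cmp C y e"
  shows "x = y"
proof -
  from assms(1) obtain a b Z Y Q where
    ar: "arr C a Z Y" "arr C b Z Y" "arr C e Y Q" "cmp C e a = cmp C e b"
    and coeq: "\<And>h W. arr C h Y W \<Longrightarrow> cmp C h a = cmp C h b \<Longrightarrow> \<exists>!k. arr C k Q W \<and> cmp C k e = h"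
    unfolding regular_epi_def coequalizer_def by blast
  have Q: "Cod C e = Q" using ar(3) arrD by blast
  have h: "arr C (cmp C x e) Y W" using comp_arr[OF ar(3)] assms(2) Q by simp
  have "cmp C (cmp C x e) a = cmp C (cmp C x e) b"
    using cmp_assoc[OF ar(1) ar(3), of x W] cmp_assoc[OF ar(2) ar(3), of x W] assms(2) Q ar(4)
    by simp
  from coeq[OF h this] assms Q show ?thesis by metis
qed

lemma relation_arr: "relation C X d0 d1 \<Longrightarrow> arr C d0 (Dom C d0) X \<and> arr C d1 (Dom C d0) X"
  unfolding relation_def by blast

lemma relation_eqI:
  "relation C X d0 d1 \<Longrightarrow> arr C x W (Dom C d0) \<Longrightarrow> arr C y W (Dom C d0) \<Longrightarrow>
    cmp C d0 x = cmp C d0 y \<Longrightarrow> cmp C d1 x = cmp C d1 y \<Longrightarrow> x = y"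
  unfolding relation_def by blast

lemma rel_le_if_cover_factors:
  assumes e: "regular_epi C e" "arr C e E (Dom C u0)"
    and u: "relation C X u0 u1" and v: "relation C X v0 v1"
    and k: "arr C k E (Dom C v0)"
    and k0: "cmp C u0 e = cmp C v0 k" and k1: "cmp C u1 e = cmp C v1 k"
  shows "rel_le C u0 u1 v0 v1"
proof -
  from e(1) obtain a b Z Q where
    ar: "arr C a Z E" "arr C b Z E" "arr C e E Q" "cmp C e a = cmp C e b"
    and coeq: "\<And>h W. arr C h E W \<Longrightarrow> cmp C h a = cmp C h b \<Longrightarrow> \<exists>!k. arr C k Q W \<and> cmp C k e = h"
    unfolding regular_epi_def coequalizer_def using e(2) arrD by metis
  have Q: "Q = Dom C u0" "Cod C e = Dom C u0" using ar(3) e(2) arrD by blast+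
  have u0: "arr C u0 Q X" and u1: "arr C u1 Q X" using relation_arr[OF u] Q by auto
  have v0: "arr C v0 (Dom C v0) X" and v1: "arr C v1 (Dom C v0) X" using relation_arr[OF v] by auto
  have coeq_through_v: "cmp C w (cmp C k a) = cmp C w (cmp C k b)"
    if w: "arr C w (Dom C v0) X" and uw: "arr C u Q X" and ke: "cmp C u e = cmp C w k" for u w
  proof -
    have "cmp C w (cmp C k a) = cmp C u (cmp C e a)"
      using cmp_assoc[OF ar(1) k w] cmp_assoc[OF ar(1) ar(3) uw] ke by simp
    also have "\<dots> = cmp C w (cmp C k b)"
      using cmp_assoc[OF ar(2) k w] cmp_assoc[OF ar(2) ar(3) uw] ke ar(4) by simp
    finally show ?thesis .
  qed
  have "cmp C k a = cmp C k b"
    using relation_eqI[OF v comp_arr[OF ar(1) k] comp_arr[OF ar(2) k]]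
      coeq_through_v[OF v0 u0 k0] coeq_through_v[OF v1 u1 k1] by blast
  then obtain h where h: "arr C h Q (Dom C v0)" "cmp C h e = k"
    using coeq[OF k] by blast
  have "cmp C v0 h = u0"
    using regular_epi_cancel[OF e(1), of _ X] comp_arr[OF h(1) v0] u0
      cmp_assoc[OF ar(3) h(1) v0] h(2) k0 Q by simp
  moreover have "cmp C v1 h = u1"
    using regular_epi_cancel[OF e(1), of _ X] comp_arr[OF h(1) v1] u1
      cmp_assoc[OF ar(3) h(1) v1] h(2) k1 Q by simp
  ultimately show ?thesis using h(1) Q unfolding rel_le_def by blast
qed

lemma relation_converse: "relation C X d0 d1 \<Longrightarrow> relation C X d1 d0"
  unfolding relation_def arr_def by metis

lemma reflexive_relation_converse: "reflexive_relation C X d0 d1 \<Longrightarrow> reflexive_relation C X d1 d0"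
  unfolding reflexive_relation_def reflexivity_def
  using relation_converse relation_arr arrD by metis

lemma rel_le_converse:
  "relation C X a0 a1 \<Longrightarrow> relation C X b0 b1 \<Longrightarrow> rel_le C a1 a0 b1 b0 \<Longrightarrow> rel_le C a0 a1 b0 b1"
  unfolding rel_le_def using relation_arr arrD by metis

lemma is_composite_converse:
  assumes "is_composite C X a0 a1 b0 b1 w0 w1"
  shows "is_composite C X b1 b0 a1 a0 w1 w0"
proof -
  from assms obtain pi0 pi1 e where H: "pullback C a1 b0 pi0 pi1" "regular_epi C e"
    "arr C e (Dom C pi0) (Dom C w0)" "cmp C w0 e = cmp C a0 pi0" "cmp C w1 e = cmp C b1 pi1"
    "relation C X w0 w1"
    unfolding is_composite_def by blast
  have "Dom C pi1 = Dom C pi0" using pullbackD(4)[OF H(1)] arrD by blast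
  moreover have "Dom C w1 = Dom C w0" using relation_arr[OF H(6)] arrD by blast
  ultimately show ?thesis
    unfolding is_composite_def using pullback_sym[OF H(1)] H(2-5) relation_converse[OF H(6)] by metis
qed

lemma binary_product_exists:
  assumes reg: "regular_category C" and "A \<in> Ob C" "B \<in> Ob C"
  shows "\<exists>p0 p1. binary_product C p0 p1 A B"
proof -
  from reg obtain T where T: "terminal C T" unfolding regular_category_def by blast
  with assms(2,3) obtain tA tB where tA: "arr C tA A T" and tB: "arr C tB B T"
    unfolding terminal_def by blast
  with reg obtain p0 p1 where pb: "pullback C tA tB p0 p1"
    unfolding regular_category_def arr_def by metis
  have dom: "Dom C tA = A" "Dom C tB = B" using tA tB arrD by auto
  have "binary_product C p0 p1 A B"
    unfolding binary_product_def
  proof (intro conjI allI impI)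
    show "arr C p0 (Dom C p0) A" "arr C p1 (Dom C p0) B" using pullbackD(3,4)[OF pb] dom by auto
    fix x y W
    assume x: "arr C x W A" and y: "arr C y W B"
    have "cmp C tA x = cmp C tB y"
      using T comp_arr[OF x tA] comp_arr[OF y tB] arr_Ob(1)[OF x] unfolding terminal_def by blast
    then show "\<exists>!u. arr C u W (Dom C p0) \<and> cmp C p0 u = x \<and> cmp C p1 u = y"
      using pullbackD(6)[OF pb] x y dom by simp
  qed
  then show ?thesis by blast
qed

lemma binary_product_pair:
  "binary_product C p0 p1 A B \<Longrightarrow> arr C x W A \<Longrightarrow> arr C y W B \<Longrightarrow>
    \<exists>u. arr C u W (Dom C p0) \<and> cmp C p0 u = x \<and> cmp C p1 u = y"
  unfolding binary_product_def by blast

lemma binary_product_eqI: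
  assumes P: "binary_product C p0 p1 A B"
    and u: "arr C u W (Dom C p0)" and u': "arr C u' W (Dom C p0)"
    and "cmp C p0 u = cmp C p0 u'" and "cmp C p1 u = cmp C p1 u'"
  shows "u = u'"
proof -
  have p0: "arr C p0 (Dom C p0) A" and p1: "arr C p1 (Dom C p0) B"
    using P unfolding binary_product_def by auto
  have "\<exists>!v. arr C v W (Dom C p0) \<and> cmp C p0 v = cmp C p0 u \<and> cmp C p1 v = cmp C p1 u"
    using P comp_arr[OF u p0] comp_arr[OF u p1] unfolding binary_product_def by blast
  then show ?thesis using u u' assms(4,5) by metis
qed

lemma mono_pairing_relation:
  assumes P: "binary_product C p0 p1 X X" and v: "relation C X v0 v1"
    and c: "arr C c (Dom C v0) (Dom C p0)" "cmp C p0 c = v0" "cmp C p1 c = v1"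
  shows "mono C c"
  unfolding mono_def
proof (intro conjI allI impI)
  show "c \<in> Ar C" using c arrD by blast
  have p0: "arr C p0 (Dom C p0) X" and p1: "arr C p1 (Dom C p0) X"
    using P unfolding binary_product_def by auto
  fix x y W
  assume x: "arr C x W (Dom C c)" and y: "arr C y W (Dom C c)" and eq: "cmp C c x = cmp C c y"
  have x': "arr C x W (Dom C v0)" and y': "arr C y W (Dom C v0)" using x y c arrD by auto
  have "cmp C v0 x = cmp C v0 y"
    using cmp_assoc[OF x' c(1) p0] cmp_assoc[OF y' c(1) p0] eq c(2) by simp
  moreover have "cmp C v1 x = cmp C v1 y"
    using cmp_assoc[OF x' c(1) p1] cmp_assoc[OF y' c(1) p1] eq c(3) by simp
  ultimately show "x = y" using relation_eqI[OF v x' y'] by blast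
qed

lemma jointly_extremally_epicD:
  "jointly_extremally_epic C a b \<Longrightarrow> mono C m \<Longrightarrow> Cod C m = Cod C a \<Longrightarrow>
    arr C u (Dom C a) (Dom C m) \<Longrightarrow> arr C v (Dom C b) (Dom C m) \<Longrightarrow>
    cmp C m u = a \<Longrightarrow> cmp C m v = b \<Longrightarrow> iso C m"
  unfolding jointly_extremally_epic_def by blast

lemma factor_through_mono_if_jointly_extremally_epic:
  assumes reg: "regular_category C" and ab: "jointly_extremally_epic C a b"
    and c_mono: "mono C c" and c: "arr C c V P" and \<phi>: "arr C \<phi> (Cod C a) P"
    and x: "arr C x (Dom C a) V" and y: "arr C y (Dom C b) V"
    and "cmp C \<phi> a = cmp C c x" and "cmp C \<phi> b = cmp C c y"
  shows "\<exists>k. arr C k (Cod C a) V \<and> cmp C c k = \<phi>"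
proof -
  define T where "T = Cod C a"
  have a: "arr C a (Dom C a) T" and b: "arr C b (Dom C b) T"
    using ab unfolding jointly_extremally_epic_def arr_def T_def by auto
  from reg obtain m w where pb: "pullback C \<phi> c m w"
    using \<phi> c unfolding regular_category_def arr_def by metis
  have \<phi>T: "arr C \<phi> T P" using \<phi> T_def by simp
  have dom: "Dom C \<phi> = T" "Dom C c = V" using \<phi> c arrD T_def by auto
  have m: "arr C m (Dom C m) T" and w: "arr C w (Dom C m) V" using pullbackD(3,4)[OF pb] dom by auto
  have m_mono: "mono C m" using mono_pullback[OF pb c_mono] .
  obtain g1 where "arr C g1 (Dom C a) (Dom C m)" "cmp C m g1 = a"
    using pullback_lift[OF pb _ _ assms(8)] a x dom by auto
  moreover obtain g2 where "arr C g2 (Dom C b) (Dom C m)" "cmp C m g2 = b"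
    using pullback_lift[OF pb _ _ assms(9)] b y dom by auto
  ultimately have "iso C m"
    using jointly_extremally_epicD[OF ab m_mono] m arrD T_def by blast
  then obtain m' where m': "arr C m' T (Dom C m)" "cmp C m m' = idn C T"
    unfolding iso_def using m arrD by metis
  have "cmp C c (cmp C w m') = \<phi>"
    using cmp_assoc[OF m'(1) w c] cmp_assoc[OF m'(1) m \<phi>T] pullbackD(5)[OF pb] m'(2)
      cmp_idn_right[OF \<phi>T] dom by simp
  then show ?thesis using comp_arr[OF m'(1) w] T_def by blast
qed

lemma span_factors_through_relation_if_jointly_extremally_epic:
  assumes reg: "regular_category C" and ab: "jointly_extremally_epic C a b"
    and v: "relation C X v0 v1"
    and f0: "arr C f0 (Cod C a) X" and f1: "arr C f1 (Cod C a) X"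
    and x: "arr C x (Dom C a) (Dom C v0)" and y: "arr C y (Dom C b) (Dom C v0)"
    and xa: "cmp C f0 a = cmp C v0 x" "cmp C f1 a = cmp C v1 x"
    and yb: "cmp C f0 b = cmp C v0 y" "cmp C f1 b = cmp C v1 y"
  shows "\<exists>k. arr C k (Cod C a) (Dom C v0) \<and> cmp C v0 k = f0 \<and> cmp C v1 k = f1"
proof -
  have v0: "arr C v0 (Dom C v0) X" and v1: "arr C v1 (Dom C v0) X" using relation_arr[OF v] by auto
  have a: "arr C a (Dom C a) (Cod C a)" and b: "arr C b (Dom C b) (Cod C a)"
    using ab unfolding jointly_extremally_epic_def arr_def by auto
  obtain p0 p1 where P: "binary_product C p0 p1 X X"
    using binary_product_exists[OF reg] arr_Ob(2)[OF v0] by blast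
  have p0: "arr C p0 (Dom C p0) X" and p1: "arr C p1 (Dom C p0) X"
    using P unfolding binary_product_def by auto
  obtain \<phi> where \<phi>: "arr C \<phi> (Cod C a) (Dom C p0)" "cmp C p0 \<phi> = f0" "cmp C p1 \<phi> = f1"
    using binary_product_pair[OF P f0 f1] by blast
  obtain c where c: "arr C c (Dom C v0) (Dom C p0)" "cmp C p0 c = v0" "cmp C p1 c = v1"
    using binary_product_pair[OF P v0 v1] by blast
  have restriction: "cmp C \<phi> z = cmp C c t"
    if z: "arr C z Z (Cod C a)" and t: "arr C t Z (Dom C v0)"
      and "cmp C f0 z = cmp C v0 t" "cmp C f1 z = cmp C v1 t" for z t Z
    using binary_product_eqI[OF P comp_arr[OF z \<phi>(1)] comp_arr[OF t c(1)]] that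
      cmp_assoc[OF z \<phi>(1) p0] cmp_assoc[OF z \<phi>(1) p1]
      cmp_assoc[OF t c(1) p0] cmp_assoc[OF t c(1) p1] \<phi>(2,3) c(2,3) by simp
  obtain k where k: "arr C k (Cod C a) (Dom C v0)" "cmp C c k = \<phi>"
    using factor_through_mono_if_jointly_extremally_epic[OF reg ab
        mono_pairing_relation[OF P v c] c(1) \<phi>(1) x y]
      restriction[OF a x xa] restriction[OF b y yb] by blast
  have "cmp C v0 k = f0" using cmp_assoc[OF k(1) c(1) p0] k(2) c(2) \<phi>(2) by simp
  moreover have "cmp C v1 k = f1" using cmp_assoc[OF k(1) c(1) p1] k(2) c(3) \<phi>(3) by simp
  ultimately show ?thesis using k(1) by blast
qed

lemma rel_le_composite_left:
  assumes AB: "is_composite C X a0 a1 b0 b1 w0 w1"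
    and A: "relation C X a0 a1" and B: "reflexive_relation C X b0 b1"
  shows "rel_le C a0 a1 w0 w1"
proof -
  from B obtain \<beta> where b0: "arr C b0 (Dom C b0) X" and b1: "arr C b1 (Dom C b0) X"
    and \<beta>: "arr C \<beta> X (Dom C b0)" "cmp C b0 \<beta> = idn C X" "cmp C b1 \<beta> = idn C X"
    unfolding reflexive_relation_def reflexivity_def using relation_arr by blast
  from AB obtain pi0 pi1 e where pb: "pullback C a1 b0 pi0 pi1"
    and e: "arr C e (Dom C pi0) (Dom C w0)"
    and e0: "cmp C w0 e = cmp C a0 pi0" and e1: "cmp C w1 e = cmp C b1 pi1"
    and w: "relation C X w0 w1"
    unfolding is_composite_def by blast
  have a0: "arr C a0 (Dom C a0) X" and a1: "arr C a1 (Dom C a0) X" using relation_arr[OF A] by auto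
  have w0: "arr C w0 (Dom C w0) X" and w1: "arr C w1 (Dom C w0) X" using relation_arr[OF w] by auto
  have dom: "Dom C a1 = Dom C a0" using a1 arrD by blast
  have pi0: "arr C pi0 (Dom C pi0) (Dom C a0)" and pi1: "arr C pi1 (Dom C pi0) (Dom C b0)"
    using pullbackD(3,4)[OF pb] dom by auto
  have "cmp C a1 (idn C (Dom C a0)) = cmp C b0 (cmp C \<beta> a1)"
    using cmp_idn_right[OF a1] cmp_assoc[OF a1 \<beta>(1) b0] \<beta>(2) cmp_idn_left[OF a1] by simp
  then obtain z where z: "arr C z (Dom C a0) (Dom C pi0)"
      "cmp C pi0 z = idn C (Dom C a0)" "cmp C pi1 z = cmp C \<beta> a1"
    using pullback_lift[OF pb, of "idn C (Dom C a0)" "Dom C a0" "cmp C \<beta> a1"]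
      idn_arr[OF arr_Ob(1)[OF a0]] comp_arr[OF a1 \<beta>(1)] dom by auto
  have "cmp C w0 (cmp C e z) = a0"
    using cmp_assoc[OF z(1) e w0] cmp_assoc[OF z(1) pi0 a0] e0 z(2) cmp_idn_right[OF a0] by simp
  moreover have "cmp C w1 (cmp C e z) = a1"
    using cmp_assoc[OF z(1) e w1] cmp_assoc[OF z(1) pi1 b1] cmp_assoc[OF a1 \<beta>(1) b1]
      e1 z(3) \<beta>(3) cmp_idn_left[OF a1] by simp
  ultimately show ?thesis unfolding rel_le_def using comp_arr[OF z(1) e] by blast
qed

lemma rel_le_composite_right:
  assumes "is_composite C X a0 a1 b0 b1 w0 w1"
    and "reflexive_relation C X a0 a1" and "relation C X b0 b1"
  shows "rel_le C b0 b1 w0 w1"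
proof -
  have "rel_le C b1 b0 w1 w0"
    using rel_le_composite_left[OF is_composite_converse[OF assms(1)] relation_converse[OF assms(3)]
        reflexive_relation_converse[OF assms(2)]] .
  moreover have "relation C X w0 w1" using assms(1) unfolding is_composite_def by blast
  ultimately show ?thesis using rel_le_converse[OF assms(3)] by blast
qed

lemma fibrationalD:
  "fibrational C \<Sigma> \<Longrightarrow> (f, s) \<in> \<Sigma> \<Longrightarrow> g \<in> Ar C \<Longrightarrow> Cod C g = Cod C f \<Longrightarrow>
    pullback C f g g' f' \<Longrightarrow> arr C s' (Dom C g) (Dom C f') \<Longrightarrow>
    cmp C f' s' = idn C (Dom C g) \<Longrightarrow> cmp C g' s' = cmp C s g \<Longrightarrow> (f', s') \<in> \<Sigma>"
  unfolding fibrational_def by blast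

lemma symmetry_involutive:
  assumes rel: "relation C X s0 s1" and \<sigma>: "arr C \<sigma> (Dom C s0) (Dom C s0)"
    and \<sigma>0: "cmp C s0 \<sigma> = s1" and \<sigma>1: "cmp C s1 \<sigma> = s0"
  shows "cmp C \<sigma> \<sigma> = idn C (Dom C s0)"
proof -
  have s0: "arr C s0 (Dom C s0) X" and s1: "arr C s1 (Dom C s0) X" using relation_arr[OF rel] by auto
  have "cmp C s0 (cmp C \<sigma> \<sigma>) = cmp C s0 (idn C (Dom C s0))"
    using cmp_assoc[OF \<sigma> \<sigma> s0] \<sigma>0 \<sigma>1 cmp_idn_right[OF s0] by simp
  moreover have "cmp C s1 (cmp C \<sigma> \<sigma>) = cmp C s1 (idn C (Dom C s0))"
    using cmp_assoc[OF \<sigma> \<sigma> s1] \<sigma>0 \<sigma>1 cmp_idn_right[OF s1] by simp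
  ultimately show ?thesis
    using relation_eqI[OF rel] comp_arr[OF \<sigma> \<sigma>] idn_arr[OF arr_Ob(1)[OF s0]] by blast
qed

lemma symmetry_pullback_idn:
  assumes rel: "relation C X s0 s1" and \<sigma>: "arr C \<sigma> (Dom C s0) (Dom C s0)"
    and \<sigma>0: "cmp C s0 \<sigma> = s1" and \<sigma>1: "cmp C s1 \<sigma> = s0"
  shows "pullback C s0 (idn C X) \<sigma> s1"
  unfolding pullback_def
proof (intro exI conjI allI impI)
  define S where "S = Dom C s0"
  show s0: "arr C s0 S X" and s1: "arr C s1 S X" using relation_arr[OF rel] S_def by auto
  show "arr C (idn C X) X X" using idn_arr[OF arr_Ob(2)[OF s0]] .
  show \<sigma>S: "arr C \<sigma> S S" using \<sigma> S_def by simp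
  show "cmp C s0 \<sigma> = cmp C (idn C X) s1" using \<sigma>0 cmp_idn_left[OF s1] by simp
  have \<sigma>\<sigma>: "cmp C \<sigma> \<sigma> = idn C S" using symmetry_involutive[OF assms] S_def by simp
  fix x y W
  assume x: "arr C x W S" and y: "arr C y W X" and "cmp C s0 x = cmp C (idn C X) y"
  then have xy: "cmp C s0 x = y" using cmp_idn_left[OF y] by simp
  show "\<exists>!u. arr C u W S \<and> cmp C \<sigma> u = x \<and> cmp C s1 u = y"
  proof (rule ex1I[of _ "cmp C \<sigma> x"])
    show "arr C (cmp C \<sigma> x) W S \<and> cmp C \<sigma> (cmp C \<sigma> x) = x \<and> cmp C s1 (cmp C \<sigma> x) = y"
      using comp_arr[OF x \<sigma>S] cmp_assoc[OF x \<sigma>S \<sigma>S] \<sigma>\<sigma> cmp_idn_left[OF x]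
        cmp_assoc[OF x \<sigma>S s1] \<sigma>1 xy by simp
    fix u
    assume "arr C u W S \<and> cmp C \<sigma> u = x \<and> cmp C s1 u = y"
    then show "u = cmp C \<sigma> x"
      using cmp_assoc[of u W S \<sigma> S \<sigma> S] \<sigma>S \<sigma>\<sigma> cmp_idn_left by metis
  qed
qed

lemma sigma_relation_converse:
  assumes fib: "fibrational C \<Sigma>" and S: "sigma_relation C \<Sigma> X s0 s1"
    and sym: "symmetric_relation C X s0 s1"
  shows "sigma_relation C \<Sigma> X s1 s0"
proof -
  from S obtain \<rho> where rel: "relation C X s0 s1"
    and \<rho>: "arr C \<rho> X (Dom C s0)" "cmp C s0 \<rho> = idn C X" "cmp C s1 \<rho> = idn C X"
    and \<Sigma>: "(s0, \<rho>) \<in> \<Sigma>"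
    unfolding sigma_relation_def reflexivity_def by blast
  from sym obtain \<sigma> where \<sigma>: "arr C \<sigma> (Dom C s0) (Dom C s0)" "cmp C s0 \<sigma> = s1" "cmp C s1 \<sigma> = s0"
    unfolding symmetric_relation_def by blast
  have s0: "arr C s0 (Dom C s0) X" and s1: "arr C s1 (Dom C s0) X" using relation_arr[OF rel] by auto
  have X: "arr C (idn C X) X X" using idn_arr[OF arr_Ob(1)[OF \<rho>(1)]] .
  have \<sigma>\<rho>: "arr C (cmp C \<sigma> \<rho>) X (Dom C s0)" using comp_arr[OF \<rho>(1) \<sigma>(1)] .
  have dom: "Dom C (idn C X) = X" "Cod C (idn C X) = X" "Cod C s0 = X" "Dom C s1 = Dom C s0"
    using arrD[OF X] arrD[OF s0] arrD[OF s1] by auto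
  have \<sigma>\<rho>1: "cmp C s1 (cmp C \<sigma> \<rho>) = idn C X" and \<sigma>\<rho>0: "cmp C s0 (cmp C \<sigma> \<rho>) = idn C X"
    using cmp_assoc[OF \<rho>(1) \<sigma>(1) s1] cmp_assoc[OF \<rho>(1) \<sigma>(1) s0] \<sigma>(2,3) \<rho>(2,3) by simp_all
  have "cmp C \<sigma> (cmp C \<sigma> \<rho>) = cmp C \<rho> (idn C X)"
    using cmp_assoc[OF \<rho>(1) \<sigma>(1) \<sigma>(1)] symmetry_involutive[OF rel \<sigma>]
      cmp_idn_left[OF \<rho>(1)] cmp_idn_right[OF \<rho>(1)] by simp
  then have "(s1, cmp C \<sigma> \<rho>) \<in> \<Sigma>"
    using fibrationalD[OF fib \<Sigma> _ _ symmetry_pullback_idn[OF rel \<sigma>]] arrD[OF X] \<sigma>\<rho> \<sigma>\<rho>1 dom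
    by simp
  moreover have "reflexivity C X s1 s0 (cmp C \<sigma> \<rho>)"
    unfolding reflexivity_def using \<sigma>\<rho> \<sigma>\<rho>0 \<sigma>\<rho>1 dom by simp
  ultimately show ?thesis
    unfolding sigma_relation_def using relation_converse[OF rel] by blast
qed

lemma sigma_maltsevD:
  "sigma_maltsev C \<Sigma> \<Longrightarrow> (f, s) \<in> \<Sigma> \<Longrightarrow> split_epi C g t \<Longrightarrow> Cod C g = Cod C f \<Longrightarrow>
    pullback C f g g' f' \<Longrightarrow>
    arr C s' (Dom C g) (Dom C f') \<Longrightarrow> cmp C f' s' = idn C (Dom C g) \<Longrightarrow> cmp C g' s' = cmp C s g \<Longrightarrow>
    arr C t' (Dom C f) (Dom C f') \<Longrightarrow> cmp C f' t' = cmp C t f \<Longrightarrow> cmp C g' t' = idn C (Dom C f) \<Longrightarrow>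
    jointly_extremally_epic C s' t'"
  unfolding sigma_maltsev_def by blast

lemma sigma_maltsev_composite_pullback_sections:
  assumes malt: "sigma_maltsev C \<Sigma>"
    and relR: "relation C X r0 r1" and \<rho>: "reflexivity C X r0 r1 \<rho>"
    and relA: "relation C X a0 a1" and \<alpha>: "reflexivity C X a0 a1 \<alpha>" and \<Sigma>: "(a0, \<alpha>) \<in> \<Sigma>"
    and pb: "pullback C r1 a0 pi0 pi1"
  obtains s t where "arr C s (Dom C r0) (Dom C pi0)"
      "cmp C pi0 s = idn C (Dom C r0)" "cmp C pi1 s = cmp C \<alpha> r1"
    and "arr C t (Dom C a0) (Dom C pi0)"
      "cmp C pi0 t = cmp C \<rho> a0" "cmp C pi1 t = idn C (Dom C a0)"
    and "jointly_extremally_epic C s t"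
proof -
  have \<rho>: "arr C \<rho> X (Dom C r0)" "cmp C r1 \<rho> = idn C X"
    and \<alpha>: "arr C \<alpha> X (Dom C a0)" "cmp C a0 \<alpha> = idn C X"
    using \<rho> \<alpha> unfolding reflexivity_def by auto
  have r0: "arr C r0 (Dom C r0) X" and r1: "arr C r1 (Dom C r0) X" using relation_arr[OF relR] by auto
  have a0: "arr C a0 (Dom C a0) X" using relation_arr[OF relA] by auto
  have dom: "Dom C r1 = Dom C r0" "Cod C r1 = X" "Cod C a0 = X" using r1 a0 arrD by auto
  have "cmp C r1 (idn C (Dom C r0)) = cmp C a0 (cmp C \<alpha> r1)"
    using cmp_idn_right[OF r1] cmp_assoc[OF r1 \<alpha>(1) a0] \<alpha>(2) cmp_idn_left[OF r1] by simp
  then obtain s where s: "arr C s (Dom C r0) (Dom C pi0)"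
      "cmp C pi0 s = idn C (Dom C r0)" "cmp C pi1 s = cmp C \<alpha> r1"
    using pullback_lift[OF pb, of "idn C (Dom C r0)" "Dom C r0" "cmp C \<alpha> r1"]
      idn_arr[OF arr_Ob(1)[OF r0]] comp_arr[OF r1 \<alpha>(1)] dom by auto
  have "cmp C r1 (cmp C \<rho> a0) = cmp C a0 (idn C (Dom C a0))"
    using cmp_idn_right[OF a0] cmp_assoc[OF a0 \<rho>(1) r1] \<rho>(2) cmp_idn_left[OF a0] by simp
  then obtain t where t: "arr C t (Dom C a0) (Dom C pi0)"
      "cmp C pi0 t = cmp C \<rho> a0" "cmp C pi1 t = idn C (Dom C a0)"
    using pullback_lift[OF pb, of "cmp C \<rho> a0" "Dom C a0" "idn C (Dom C a0)"]
      idn_arr[OF arr_Ob(1)[OF a0]] comp_arr[OF a0 \<rho>(1)] dom by auto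
  have "split_epi C r1 \<rho>" unfolding split_epi_def using r1 \<rho> arrD by auto
  then have "jointly_extremally_epic C s t"
    using sigma_maltsevD[OF malt \<Sigma> _ _ pullback_sym[OF pb]] s t dom by simp
  with s t show ?thesis using that by blast
qed

lemma composite_le_reversed_composite:
  assumes reg: "regular_category C" and malt: "sigma_maltsev C \<Sigma>"
    and R: "reflexive_relation C X r0 r1" and A: "sigma_relation C \<Sigma> X a0 a1"
    and RA: "is_composite C X r0 r1 a0 a1 u0 u1" and AR: "is_composite C X a0 a1 r0 r1 v0 v1"
  shows "rel_le C u0 u1 v0 v1"
proof -
  from R obtain \<rho> where relR: "relation C X r0 r1" and \<rho>: "reflexivity C X r0 r1 \<rho>"
    unfolding reflexive_relation_def by blast
  from A obtain \<alpha> where relA: "relation C X a0 a1" and \<alpha>: "reflexivity C X a0 a1 \<alpha>"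
    and \<Sigma>: "(a0, \<alpha>) \<in> \<Sigma>"
    unfolding sigma_relation_def by blast
  from RA obtain pi0 pi1 e where pb: "pullback C r1 a0 pi0 pi1" and e: "regular_epi C e"
    and e': "arr C e (Dom C pi0) (Dom C u0)"
    and e0: "cmp C u0 e = cmp C r0 pi0" and e1: "cmp C u1 e = cmp C a1 pi1"
    and u: "relation C X u0 u1"
    unfolding is_composite_def by blast
  obtain s t where s: "arr C s (Dom C r0) (Dom C pi0)"
      "cmp C pi0 s = idn C (Dom C r0)" "cmp C pi1 s = cmp C \<alpha> r1"
    and t: "arr C t (Dom C a0) (Dom C pi0)"
      "cmp C pi0 t = cmp C \<rho> a0" "cmp C pi1 t = idn C (Dom C a0)"
    and st: "jointly_extremally_epic C s t"
    using sigma_maltsev_composite_pullback_sections[OF malt relR \<rho> relA \<alpha> \<Sigma> pb] .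
  have v: "relation C X v0 v1" using AR unfolding is_composite_def by blast
  have r0: "arr C r0 (Dom C r0) X" and r1: "arr C r1 (Dom C r0) X" using relation_arr[OF relR] by auto
  have a0: "arr C a0 (Dom C a0) X" and a1: "arr C a1 (Dom C a0) X" using relation_arr[OF relA] by auto
  have pi0: "arr C pi0 (Dom C pi0) (Dom C r0)" and pi1: "arr C pi1 (Dom C pi0) (Dom C a0)"
    using pullbackD(3,4)[OF pb] arrD[OF r1] arrD[OF a0] by auto
  have \<rho>': "arr C \<rho> X (Dom C r0)" "cmp C r0 \<rho> = idn C X"
    and \<alpha>': "arr C \<alpha> X (Dom C a0)" "cmp C a1 \<alpha> = idn C X"
    using \<rho> \<alpha> unfolding reflexivity_def by auto
  have "reflexive_relation C X a0 a1" using relA \<alpha> unfolding reflexive_relation_def by blast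
  then obtain h1 where h1: "arr C h1 (Dom C r0) (Dom C v0)" "cmp C v0 h1 = r0" "cmp C v1 h1 = r1"
    using rel_le_composite_right[OF AR _ relR] unfolding rel_le_def by blast
  obtain h2 where h2: "arr C h2 (Dom C a0) (Dom C v0)" "cmp C v0 h2 = a0" "cmp C v1 h2 = a1"
    using rel_le_composite_left[OF AR relA R] unfolding rel_le_def by blast
  have "cmp C (cmp C r0 pi0) s = r0" "cmp C (cmp C a1 pi1) s = r1"
    using cmp_assoc[OF s(1) pi0 r0] s(2) cmp_idn_right[OF r0] cmp_assoc[OF s(1) pi1 a1] s(3)
      cmp_assoc[OF r1 \<alpha>'(1) a1] \<alpha>'(2) cmp_idn_left[OF r1] by simp_all
  moreover have "cmp C (cmp C r0 pi0) t = a0" "cmp C (cmp C a1 pi1) t = a1"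
    using cmp_assoc[OF t(1) pi0 r0] t(2) cmp_assoc[OF a0 \<rho>'(1) r0] \<rho>'(2) cmp_idn_left[OF a0]
      cmp_assoc[OF t(1) pi1 a1] t(3) cmp_idn_right[OF a1] by simp_all
  moreover have "Cod C s = Dom C pi0" "Dom C s = Dom C r0" "Dom C t = Dom C a0"
    using s(1) t(1) arrD by auto
  ultimately obtain k where k: "arr C k (Dom C pi0) (Dom C v0)"
      "cmp C v0 k = cmp C r0 pi0" "cmp C v1 k = cmp C a1 pi1"
    using span_factors_through_relation_if_jointly_extremally_epic[OF reg st v,
        of "cmp C r0 pi0" "cmp C a1 pi1" h1 h2]
      comp_arr[OF pi0 r0] comp_arr[OF pi1 a1] h1 h2 by auto
  show ?thesis
    using rel_le_if_cover_factors[OF e e' u v k(1)] e0 e1 k(2,3) by simp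
qed

end

theorem proposition2p6:
  fixes C :: "('o, 'a) cat" and \<Sigma> :: "('a \<times> 'a) set"
    and X :: 'o and r0 r1 s0 s1 :: 'a
  assumes "regular_category C"
    and "fibrational C \<Sigma>"
    and "sigma_maltsev C \<Sigma>"
    and "X \<in> Ob C"
    and "reflexive_relation C X r0 r1"
    and "sigma_relation C \<Sigma> X s0 s1"
    and "symmetric_relation C X s0 s1"
  shows "\<forall>u0 u1 v0 v1. is_composite C X r0 r1 s0 s1 u0 u1 \<longrightarrow>
           is_composite C X s0 s1 r0 r1 v0 v1 \<longrightarrow>
           rel_le C u0 u1 v0 v1 \<and> rel_le C v0 v1 u0 u1"
proof (intro allI impI conjI)
  interpret category_context C
    using assms(1) unfolding regular_category_def by unfold_locales blast
  fix u0 u1 v0 v1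
  assume RS: "is_composite C X r0 r1 s0 s1 u0 u1" and SR: "is_composite C X s0 s1 r0 r1 v0 v1"
  show "rel_le C u0 u1 v0 v1"
    using composite_le_reversed_composite[OF assms(1,3,5,6) RS SR] .
  have "rel_le C v1 v0 u1 u0"
    using composite_le_reversed_composite[OF assms(1,3) reflexive_relation_converse[OF assms(5)]
        sigma_relation_converse[OF assms(2,6,7)] is_composite_converse[OF SR] is_composite_converse[OF RS]] .
  then show "rel_le C v0 v1 u0 u1"
    using rel_le_converse RS SR unfolding is_composite_def by blast
qed

end
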